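(* Assume Assumption (S) of the context holds and define $(v,\omega)_*:=(v,M^*\omega)$ and $\|v\|_*=\sqrt{(v,v)_*}$ for $v,\omega\in\mathbb V^k$. Then for every $v\in\mathbb V^k$, $(v,\omega)_*=(v,\omega)$ for all $\omega\in\mathbb V^{k-1}$. Moreover there exist positive constants $c$ and $C$ independent of the mesh $\{I_i\}$ such that $c\|v\|\le\|v\|_*\le C\|v\|$ for all $v\in\mathbb V^k$.
   Context: Let $\Omega=[a,b]$ be partitioned into finitely many cells $I_i=[x_{i-\frac12},x_{i+\frac12}]$ with sizes $h_i$, $h=\max_i h_i$, quasi-uniform ($h\le Ch_i$ for all $i$, fixed $C$). $(\cdot,\cdot)$, $\|\cdot\|$ are the $L^2(\Omega)$ inner product and norm, $(\cdot,\cdot)_{I_i}$ the $L^2(I_i)$ inner product. $\mathbb V^m=\{v\in L^2(\Omega): v|_{I_i}\in\mathbb P^m(I_i)\ \forall i\}$. Each $I_i$ has subdivision points $x_{i-\frac12}=x_{i,0}<x_{i,1}<\dots<x_{i,k}<x_{i,k+1}=x_{i+\frac12}$, control volumes $I_{i,j}=[x_{i,j},x_{i,j+1}]$, $j=0,\dots,k$; $\mathbb V^{k,*}$ is the space of functions constant on each $I_{i,j}$. On each $I_i$ a quadrature $Q_i^k(v)=\sum_{j=0}^{k+1}A_{i,j}v(x_{i,j})$ is given with error $R_i^k(v)=\int_{I_i}v\,dx-Q_i^k(v)$, exact on $\mathbb P^{k-1}(I_i)$. $M^*:\mathbb V^k\to\mathbb V^{k,*}$ is defined cellwise: for $v=\omega|_{I_i}$,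 $(M^*\omega)|_{I_{i,0}}=v(x_{i-\frac12})+A_{i,0}v'(x_{i-\frac12})$ and $(M^*\omega)|_{I_{i,j}}-(M^*\omega)|_{I_{i,j-1}}=A_{i,j}v'(x_{i,j})$, $j=1,\dots,k$ (one-sided values from inside $I_i$). $L_{i,\ell}$ is the shifted Legendre polynomial of degree $\ell$ on $I_i$ with $L_{i,\ell}(x_{i+\frac12})=1$, $(L_{i,\ell},L_{i,m})_{I_i}=\delta_{\ell m}h_i/(2\ell+1)$. Assumption (S): $k\ge1$ and for every $i$, (1) $R_i^k(v)=0$ for all $v\in\mathbb P^{2k-1}(I_i)$, and (2) $\frac{h_i}{2k-1}-Q_i^k(L_{i,k+1}L_{i,k-1})>0$. Under (S), $(\cdot,M^*\cdot)$ is an inner product on $\mathbb V^k$. *)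

theory Defs
  imports "HOL-Analysis.Analysis" "HOL-Computational_Algebra.Polynomial"
begin

text \<open>Mesh: cells I_i = [x i, x (Suc i)], i < n. A function in V^m is given by
  its cellwise polynomials p i (i < n) of degree at most m.\<close>

definition pw_space :: "nat \<Rightarrow> nat \<Rightarrow> (nat \<Rightarrow> real poly) \<Rightarrow> bool" where
  "pw_space n m p \<longleftrightarrow> (\<forall>i<n. degree (p i) \<le> m)"

definition cell_size :: "(nat \<Rightarrow> real) \<Rightarrow> nat \<Rightarrow> real" where
  "cell_size x i = x (Suc i) - x i"

definition pw_ip :: "(nat \<Rightarrow> real) \<Rightarrow> nat \<Rightarrow> (nat \<Rightarrow> real poly) \<Rightarrow> (nat \<Rightarrow> real poly) \<Rightarrow> real" where
  "pw_ip x n p q = (\<Sum>i<n. integral {x i..x (Suc i)} (\<lambda>t. poly (p i) t * poly (q i) t))"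

definition quasi_uniform :: "real \<Rightarrow> (nat \<Rightarrow> real) \<Rightarrow> nat \<Rightarrow> bool" where
  "quasi_uniform Cq x n \<longleftrightarrow> (\<forall>i<n. Max (cell_size x ` {..<n}) \<le> Cq * cell_size x i)"

text \<open>Subdivision / quadrature points x_{i,j} and weights A_{i,j}, obtained as affine
  images of a fixed reference rule (nodes xi j on [0,1], weights w j).\<close>
definition node :: "(nat \<Rightarrow> real) \<Rightarrow> (nat \<Rightarrow> real) \<Rightarrow> nat \<Rightarrow> nat \<Rightarrow> real" where
  "node x \<xi> i j = x i + cell_size x i * \<xi> j"

definition weight :: "(nat \<Rightarrow> real) \<Rightarrow> (nat \<Rightarrow> real) \<Rightarrow> nat \<Rightarrow> nat \<Rightarrow> real" where
  "weight x w i j = cell_size x i * w j"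

definition quad :: "nat \<Rightarrow> (nat \<Rightarrow> real) \<Rightarrow> (nat \<Rightarrow> real) \<Rightarrow> (nat \<Rightarrow> real) \<Rightarrow> nat \<Rightarrow> (real \<Rightarrow> real) \<Rightarrow> real" where
  "quad k \<xi> w x i f = (\<Sum>j\<le>Suc k. weight x w i j * f (node x \<xi> i j))"

text \<open>Legendre polynomials on [-1,1] (Bonnet recursion) and the shifted ones on [a,b],
  normalised by L(b) = 1.\<close>
fun legP :: "nat \<Rightarrow> real \<Rightarrow> real" where
  "legP 0 t = 1"
| "legP (Suc 0) t = t"
| "legP (Suc (Suc n)) t =
     ((2 * real n + 3) * t * legP (Suc n) t - (real n + 1) * legP n t) / (real n + 2)"

definition shifted_legendre :: "real \<Rightarrow> real \<Rightarrow> nat \<Rightarrow> real \<Rightarrow> real" where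
  "shifted_legendre a b l t = legP l ((2 * t - a - b) / (b - a))"

definition assumption_S :: "nat \<Rightarrow> (nat \<Rightarrow> real) \<Rightarrow> (nat \<Rightarrow> real) \<Rightarrow> (nat \<Rightarrow> real) \<Rightarrow> nat \<Rightarrow> bool" where
  "assumption_S k \<xi> w x n \<longleftrightarrow> k \<ge> 1 \<and>
     (\<forall>i<n. (\<forall>p::real poly. degree p \<le> 2 * k - 1 \<longrightarrow>
               integral {x i..x (Suc i)} (poly p) - quad k \<xi> w x i (poly p) = 0)
          \<and> cell_size x i / real (2 * k - 1)
             - quad k \<xi> w x i (\<lambda>t. shifted_legendre (x i) (x (Suc i)) (Suc k) t *
                                     shifted_legendre (x i) (x (Suc i)) (k - 1) t) > 0)"

text \<open>Value of M^* omega on the control volume I_{i,j}, j = 0..k: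
  (M^*omega)|I_{i,0} = q(x_{i,0}) + A_{i,0} q'(x_{i,0}) and successive jumps A_{i,j} q'(x_{i,j}).\<close>
definition Mstar_val :: "(nat \<Rightarrow> real) \<Rightarrow> (nat \<Rightarrow> real) \<Rightarrow> (nat \<Rightarrow> real) \<Rightarrow> (nat \<Rightarrow> real poly) \<Rightarrow> nat \<Rightarrow> nat \<Rightarrow> real" where
  "Mstar_val x \<xi> w q i j = poly (q i) (node x \<xi> i 0)
      + (\<Sum>l\<le>j. weight x w i l * poly (pderiv (q i)) (node x \<xi> i l))"

definition ip_star :: "nat \<Rightarrow> (nat \<Rightarrow> real) \<Rightarrow> (nat \<Rightarrow> real) \<Rightarrow> (nat \<Rightarrow> real) \<Rightarrow> nat \<Rightarrow> (nat \<Rightarrow> real poly) \<Rightarrow> (nat \<Rightarrow> real poly) \<Rightarrow> real" where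
  "ip_star k \<xi> w x n p q = (\<Sum>i<n. \<Sum>j\<le>k.
      Mstar_val x \<xi> w q i j * integral {node x \<xi> i j..node x \<xi> i (Suc j)} (poly (p i)))"

end

theory Submission
  imports Defs
begin

text \<open>Let \<open>V\<close> be the antiderivative of \<open>v\<close> on a cell \<open>I\<^sub>i\<close> vanishing at its left end.
  Summation by parts over the control volumes, followed by integration by parts, gives
  \<open>(v, M\<^sup>* \<omega>)\<^sub>I\<^sub>i = (v, \<omega>)\<^sub>I\<^sub>i + R\<^sub>i(\<omega>' V)\<close>. If \<open>\<omega>\<close> has degree \<open>k - 1\<close>, then \<open>\<omega>' V\<close> has degree
  \<open>2k - 1\<close> and the quadrature error vanishes. If \<open>\<omega> = v\<close> has degree \<open>k\<close>, then \<open>v' V\<close> has degree \<open>2k\<close>,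
  and as \<open>R\<^sub>i\<close> vanishes on \<open>P\<^sup>2\<^sup>k\<^sup>-\<^sup>1\<close> it is determined by its value on \<open>L\<^sub>i\<^sub>,\<^sub>k\<^sub>+\<^sub>1 L\<^sub>i\<^sub>,\<^sub>k\<^sub>-\<^sub>1\<close>, a
  polynomial with zero integral. Comparing leading coefficients yields
  \<open>(v, v)\<^sub>* = \<parallel>v\<parallel>\<^sup>2 - \<sigma> \<Sum>\<^sub>i E\<^sub>i\<close>, where \<open>E\<^sub>i\<close> is the energy of the top Legendre mode of \<open>v\<close> on \<open>I\<^sub>i\<close>,
  so \<open>0 \<le> \<Sum>\<^sub>i E\<^sub>i \<le> \<parallel>v\<parallel>\<^sup>2\<close>, and \<open>\<sigma> = (2k - 1) Q\<^sub>i(L\<^sub>i\<^sub>,\<^sub>k\<^sub>+\<^sub>1 L\<^sub>i\<^sub>,\<^sub>k\<^sub>-\<^sub>1) / h\<^sub>i\<close> is the same on every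
  cell; condition (2) of (S) says exactly \<open>\<sigma> < 1\<close>. Hence
  \<open>min 1 (1 - \<sigma>) \<parallel>v\<parallel>\<^sup>2 \<le> \<parallel>v\<parallel>\<^sub>*\<^sup>2 \<le> max 1 (1 - \<sigma>) \<parallel>v\<parallel>\<^sup>2\<close>.\<close>

lemma eliminate_lead_coeff:
  fixes r P :: "'a::field poly"
  assumes "degree r \<le> degree P" "P \<noteq> 0"
  shows "r - smult (coeff r (degree P) / lead_coeff P) P = 0
    \<or> degree (r - smult (coeff r (degree P) / lead_coeff P) P) < degree P"
proof -
  define r' where "r' = r - smult (coeff r (degree P) / lead_coeff P) P"
  have "coeff r' i = 0" if "degree P \<le> i" for i
    using assms that by (cases "i = degree P") (auto simp: r'_def coeff_eq_0)
  then have "r' \<noteq> 0 \<Longrightarrow> degree r' < degree P"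
    using leading_coeff_neq_0 not_less by blast
  then show ?thesis unfolding r'_def by blast
qed

lemma coeff_mult_degree_le_sum:
  fixes a b :: "'a::idom poly"
  assumes "degree a \<le> m" "degree b \<le> n"
  shows "coeff (a * b) (m + n) = coeff a m * coeff b n"
proof (cases "degree a = m \<and> degree b = n")
  case True then show ?thesis using coeff_mult_degree_sum[of a b] by simp
next
  case False
  then have "degree (a * b) < m + n" "coeff a m * coeff b n = 0"
    using assms degree_mult_le[of a b] by (auto simp: coeff_eq_0)
  then show ?thesis by (simp add: coeff_eq_0)
qed

lemma poly_antiderivative_exists: "\<exists>F. pderiv F = (p :: real poly)"
proof
  have "pderiv (\<Sum>i\<le>degree p. monom (coeff p i / real (Suc i)) (Suc i))
      = (\<Sum>i\<le>degree p. monom (coeff p i) i)"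
    by (simp add: higher_pderiv_sum[of 1, simplified] pderiv_monom)
  then show "pderiv (\<Sum>i\<le>degree p. monom (coeff p i / real (Suc i)) (Suc i)) = p"
    by (simp add: poly_as_sum_of_monoms)
qed

lemma poly_antiderivative_vanishing_at:
  fixes p :: "real poly"
  obtains V where "pderiv V = p" "poly V a = 0" "degree V \<le> degree p + 1"
proof -
  obtain F where F: "pderiv F = p" using poly_antiderivative_exists by blast
  define V where "V = F - [:poly F a:]"
  have "pderiv V = p" using F by (simp add: V_def pderiv_diff)
  moreover have "degree V \<le> degree p + 1" using degree_pderiv[of V] \<open>pderiv V = p\<close> by simp
  ultimately show thesis by (intro that) (simp_all add: V_def)
qed

lemma coeff_pderiv_mult_antiderivative:
  fixes p V :: "real poly"
  assumes "pderiv V = p" "degree p \<le> k" "k \<ge> 1"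
  shows "coeff (pderiv p * V) (2 * k) = real k / (real k + 1) * (coeff p k)\<^sup>2"
proof -
  have "degree (pderiv p) \<le> k - 1" using assms(2) by (simp add: degree_pderiv)
  moreover have "degree V \<le> k + 1" using degree_pderiv[of V] assms(1,2) by simp
  ultimately have "coeff (pderiv p * V) ((k - 1) + (k + 1)) = coeff (pderiv p) (k - 1) * coeff V (k + 1)"
    by (rule coeff_mult_degree_le_sum)
  moreover have "coeff (pderiv p) (k - 1) = real k * coeff p k"
    using assms(3) by (simp add: coeff_pderiv)
  moreover have "coeff V (k + 1) = coeff p k / (real k + 1)"
    using coeff_pderiv[of V k] assms(1) by (simp add: field_simps)
  moreover have "(k - 1) + (k + 1) = 2 * k" using assms(3) by simp
  ultimately show ?thesis by (simp add: power2_eq_square mult_2)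
qed

lemma integral_poly_pderiv:
  fixes F :: "real poly"
  assumes "a \<le> b"
  shows "integral {a..b} (poly (pderiv F)) = poly F b - poly F a"
proof (rule integral_unique, rule fundamental_theorem_of_calculus[OF assms])
  fix t assume "t \<in> {a..b}"
  show "(poly F has_vector_derivative poly (pderiv F) t) (at t within {a..b})"
    using poly_DERIV[of F t] by (metis DERIV_subset has_real_derivative_iff_has_vector_derivative subset_UNIV)
qed

lemma integrable_poly [simp]: "poly (p :: real poly) integrable_on {a..b}"
  by (intro integrable_continuous_interval continuous_intros)

lemma integral_poly_add:
  "integral {a..b} (poly (p + q)) = integral {a..b} (poly p) + integral {a..b} (poly (q :: real poly))"
  unfolding poly_add[abs_def] by (rule integral_add) simp_all

lemma integral_poly_diff:
  "integral {a..b} (poly (p - q)) = integral {a..b} (poly p) - integral {a..b} (poly (q :: real poly))"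
  unfolding poly_diff[abs_def] by (rule integral_diff) simp_all

lemma integral_poly_smult: "integral {a..b} (poly (smult c p)) = c * integral {a..b} (poly (p :: real poly))"
  using integral_cmul[of "{a..b}" c "poly p"] by (simp add: poly_smult[abs_def])

lemma integral_poly_minus: "integral {a..b} (poly (- p)) = - integral {a..b} (poly (p :: real poly))"
  using integral_poly_smult[of a b "-1" p] by simp

lemma integral_poly_square_nonneg: "integral {a..b} (poly (p * p)) \<ge> (0 :: real)"
  by (rule integral_nonneg) auto

lemma integral_poly_by_parts:
  fixes p q V :: "real poly"
  assumes "a \<le> b" "pderiv V = p" "poly V a = 0"
  shows "integral {a..b} (poly (p * q)) = poly q b * poly V b - integral {a..b} (poly (pderiv q * V))"
proof -
  have "p * q = pderiv (q * V) - pderiv q * V"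
    using assms(2) by (simp add: pderiv_mult algebra_simps)
  then show ?thesis
    using assms by (simp add: integral_poly_diff integral_poly_pderiv)
qed

lemma integral_poly_pcompose_affine:
  fixes f :: "real poly"
  assumes "a < b"
  shows "integral {a..b} (poly (f \<circ>\<^sub>p [:- (a + b) / (b - a), 2 / (b - a):]))
       = (b - a) / 2 * integral {-1..1} (poly f)"
proof -
  define s where "s = [:- (a + b) / (b - a), 2 / (b - a):]"
  obtain F where F: "pderiv F = f" using poly_antiderivative_exists by blast
  have "pderiv (smult ((b - a) / 2) (F \<circ>\<^sub>p s)) = f \<circ>\<^sub>p s"
    using assms by (simp add: s_def F pderiv_smult pderiv_pcompose pderiv_pCons field_simps)
  moreover have "poly s a = -1" "poly s b = 1"
    using assms by (simp_all add: s_def divide_simps)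
  ultimately have "integral {a..b} (poly (f \<circ>\<^sub>p s)) = (b - a) / 2 * integral {-1..1} (poly f)"
    using assms integral_poly_pderiv[of a b "smult ((b - a) / 2) (F \<circ>\<^sub>p s)"]
      integral_poly_pderiv[of "-1" 1 F]
    by (simp add: F poly_pcompose right_diff_distrib)
  then show ?thesis by (simp add: s_def)
qed

section \<open>Legendre polynomials\<close>

fun legendre_poly :: "nat \<Rightarrow> real poly" where
  "legendre_poly 0 = 1"
| "legendre_poly (Suc 0) = [:0, 1:]"
| "legendre_poly (Suc (Suc n)) = smult (1 / (real n + 2))
      (smult (2 * real n + 3) ([:0, 1:] * legendre_poly (Suc n)) - smult (real n + 1) (legendre_poly n))"

lemma poly_legendre_poly: "poly (legendre_poly n) t = legP n t"
  by (induction n rule: legendre_poly.induct) (simp_all add: field_simps)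

lemma legendre_poly_bonnet:
  "smult (real n + 2) (legendre_poly (Suc (Suc n)))
     = smult (2 * real n + 3) ([:0, 1:] * legendre_poly (Suc n)) - smult (real n + 1) (legendre_poly n)"
  by simp

declare legendre_poly.simps(3) [simp del]

fun legendre_lead_coeff :: "nat \<Rightarrow> real" where
  "legendre_lead_coeff 0 = 1"
| "legendre_lead_coeff (Suc 0) = 1"
| "legendre_lead_coeff (Suc (Suc n)) = (2 * real n + 3) / (real n + 2) * legendre_lead_coeff (Suc n)"

lemma legendre_lead_coeff_pos: "legendre_lead_coeff n > 0"
  by (induction n rule: legendre_lead_coeff.induct) auto

lemma legendre_lead_coeff_Suc: "real (Suc n) * legendre_lead_coeff (Suc n) = (2 * real n + 1) * legendre_lead_coeff n"
  by (cases n) (simp_all add: field_simps)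

lemma legendre_lead_coeff_identity:
  assumes "k \<ge> 1"
  shows "real k * (2 * real k + 1) * (legendre_lead_coeff k)\<^sup>2
       = (2 * real k - 1) * (real k + 1) * legendre_lead_coeff (Suc k) * legendre_lead_coeff (k - 1)"
proof -
  have "(real k + 1) * legendre_lead_coeff (Suc k) = (2 * real k + 1) * legendre_lead_coeff k"
    using legendre_lead_coeff_Suc[of k] by (simp add: add.commute)
  moreover have "real k * legendre_lead_coeff k = (2 * real k - 1) * legendre_lead_coeff (k - 1)"
    using legendre_lead_coeff_Suc[of "k - 1"] assms by (simp add: of_nat_diff)
  ultimately show ?thesis by (simp add: power2_eq_square) algebra
qed

lemma coeff_legendre_poly_ge:
  "m \<ge> n \<Longrightarrow> coeff (legendre_poly n) m = (if m = n then legendre_lead_coeff n else 0)"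
proof (induction n arbitrary: m rule: legendre_poly.induct)
  case (3 n)
  then obtain m' where m': "m = Suc m'" by (cases m) auto
  have "coeff (legendre_poly (Suc n)) m' = (if m' = Suc n then legendre_lead_coeff (Suc n) else 0)"
    using 3 m' by (intro "3.IH"(1)) auto
  moreover have "coeff (legendre_poly n) m = 0" using 3 by (subst "3.IH"(2)) auto
  ultimately show ?case using 3 m' by (auto simp: legendre_poly.simps(3))
qed (auto simp: coeff_pCons split: nat.splits)

lemma degree_legendre_poly [simp]: "degree (legendre_poly n) = n"
proof (rule antisym)
  show "degree (legendre_poly n) \<le> n" by (rule degree_le) (auto simp: coeff_legendre_poly_ge)
  show "n \<le> degree (legendre_poly n)"
    using legendre_lead_coeff_pos[of n] by (intro le_degree) (simp add: coeff_legendre_poly_ge)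
qed

lemma coeff_legendre_poly_self [simp]: "coeff (legendre_poly n) n = legendre_lead_coeff n"
  by (simp add: coeff_legendre_poly_ge)

lemma legendre_poly_nonzero [simp]: "legendre_poly n \<noteq> 0"
  using legendre_lead_coeff_pos[of n] by (metis coeff_0 coeff_legendre_poly_self less_irrefl)

definition legendre_weight :: "real poly" where
  "legendre_weight = [:1, 0, -1:]"

lemma legendre_poly_pderiv_rec:
  "poly (pderiv (legendre_poly (Suc n))) t
     = t * poly (pderiv (legendre_poly n)) t + (real n + 1) * poly (legendre_poly n) t
   \<and> t * poly (pderiv (legendre_poly (Suc n))) t - poly (pderiv (legendre_poly n)) t
     = (real n + 1) * poly (legendre_poly (Suc n)) t"
proof (induction n)
  case 0
  then show ?case by (simp add: pderiv_pCons)
next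
  case (Suc n)
  define a b c where "a = poly (legendre_poly n) t" and "b = poly (legendre_poly (Suc n)) t"
    and "c = poly (legendre_poly (Suc (Suc n))) t"
  define a' b' c' where "a' = poly (pderiv (legendre_poly n)) t"
    and "b' = poly (pderiv (legendre_poly (Suc n))) t" and "c' = poly (pderiv (legendre_poly (Suc (Suc n)))) t"
  have IH: "b' = t * a' + (real n + 1) * a" "t * b' - a' = (real n + 1) * b"
    using Suc.IH unfolding a_def b_def a'_def b'_def by blast+
  have "poly (smult (real n + 2) (legendre_poly (Suc (Suc n)))) t
      = poly (smult (2 * real n + 3) ([:0, 1:] * legendre_poly (Suc n)) - smult (real n + 1) (legendre_poly n)) t"
    "poly (pderiv (smult (real n + 2) (legendre_poly (Suc (Suc n))))) t
      = poly (pderiv (smult (2 * real n + 3) ([:0, 1:] * legendre_poly (Suc n)) - smult (real n + 1) (legendre_poly n))) t"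
    by (simp_all only: legendre_poly_bonnet)
  then have bonnet: "(real n + 2) * c = (2 * real n + 3) * t * b - (real n + 1) * a"
    and bonnet': "(real n + 2) * c' = (2 * real n + 3) * (b + t * b') - (real n + 1) * a'"
    by (simp_all add: a_def b_def c_def a'_def b'_def c'_def pderiv_smult pderiv_diff pderiv_mult pderiv_pCons
        algebra_simps)
  have "(real n + 2) * (c' - t * b' - (real n + 2) * b) = (real n + 1) * (t * b' - a' - (real n + 1) * b)"
    using bonnet' by (simp add: algebra_simps)
  then have "c' = t * b' + (real n + 2) * b" using IH(2) by simp
  moreover have "(real n + 2) * (t * c' - b' - (real n + 2) * c) = (real n + 2) * (t * a' + (real n + 1) * a - b')"
    using bonnet bonnet' IH(2) by algebra
  then have "t * c' - b' = (real n + 2) * c" using IH(1) by simp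
  ultimately show ?case by (simp add: b_def c_def b'_def c'_def add.commute)
qed

lemma legendre_poly_ode:
  "pderiv (legendre_weight * pderiv (legendre_poly n)) = smult (- (real n * (real n + 1))) (legendre_poly n)"
proof (cases n)
  case (Suc m)
  have weighted: "legendre_weight * pderiv (legendre_poly (Suc m))
      = smult (real (Suc m)) (legendre_poly m - [:0, 1:] * legendre_poly (Suc m))"
  proof (intro poly_eq_poly_eq_iff[THEN iffD1] ext)
    fix t
    show "poly (legendre_weight * pderiv (legendre_poly (Suc m))) t
        = poly (smult (real (Suc m)) (legendre_poly m - [:0, 1:] * legendre_poly (Suc m))) t"
      using legendre_poly_pderiv_rec[of m t] by (simp add: legendre_weight_def) algebra
  qed
  show ?thesis
  proof (intro poly_eq_poly_eq_iff[THEN iffD1] ext)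
    fix t
    show "poly (pderiv (legendre_weight * pderiv (legendre_poly n))) t
        = poly (smult (- (real n * (real n + 1))) (legendre_poly n)) t"
      unfolding Suc weighted using legendre_poly_pderiv_rec[of m t]
      by (simp add: pderiv_smult pderiv_diff pderiv_mult pderiv_pCons legendre_weight_def) algebra
  qed
qed simp

lemma integral_pderiv_weighted_symmetric:
  "integral {-1..1} (poly (pderiv (legendre_weight * pderiv f) * g))
     = - integral {-1..1} (poly (legendre_weight * pderiv f * pderiv (g :: real poly)))"
proof -
  have "pderiv (legendre_weight * pderiv f * g) = pderiv (legendre_weight * pderiv f) * g + legendre_weight * pderiv f * pderiv g"
    by (simp add: pderiv_mult algebra_simps)
  moreover have "integral {-1..1} (poly (pderiv (legendre_weight * pderiv f * g))) = 0"
    by (simp add: integral_poly_pderiv legendre_weight_def)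
  ultimately show ?thesis by (simp add: integral_poly_add)
qed

lemma legendre_poly_orthogonal:
  assumes "n \<noteq> m"
  shows "integral {-1..1} (poly (legendre_poly n * legendre_poly m)) = 0"
proof -
  let ?I = "integral {-1..1} (poly (legendre_poly n * legendre_poly m))"
  have "- (real n * (real n + 1)) * ?I
      = integral {-1..1} (poly (pderiv (legendre_weight * pderiv (legendre_poly n)) * legendre_poly m))"
    by (simp add: legendre_poly_ode integral_poly_smult integral_poly_minus)
  also have "\<dots> = integral {-1..1} (poly (pderiv (legendre_weight * pderiv (legendre_poly m)) * legendre_poly n))"
    using integral_pderiv_weighted_symmetric[of "legendre_poly n" "legendre_poly m"]
      integral_pderiv_weighted_symmetric[of "legendre_poly m" "legendre_poly n"]
    by (simp add: mult_ac)
  also have "\<dots> = - (real m * (real m + 1)) * ?I"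
    by (simp add: legendre_poly_ode integral_poly_smult integral_poly_minus mult.commute)
  finally have "real n * (real n + 1) * ?I = real m * (real m + 1) * ?I" by simp
  moreover have "real n * (real n + 1) \<noteq> real m * (real m + 1)"
  proof
    assume "real n * (real n + 1) = real m * (real m + 1)"
    then have "(real n - real m) * (real n + real m + 1) = 0" by (simp add: algebra_simps)
    then show False using assms by simp
  qed
  ultimately show ?thesis by simp
qed

lemma legendre_poly_orthogonal_lower:
  "degree r < n \<Longrightarrow> integral {-1..1} (poly (legendre_poly n * r)) = 0"
proof (induction "degree r" arbitrary: r rule: less_induct)
  case less
  define d where "d = degree r"
  define c where "c = coeff r d / legendre_lead_coeff d"
  define r' where "r' = r - smult c (legendre_poly d)"
  have "r' = 0 \<or> degree r' < d"
    using eliminate_lead_coeff[of r "legendre_poly d"] by (simp add: r'_def c_def d_def)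
  then have "integral {-1..1} (poly (legendre_poly n * r')) = 0"
    using less d_def by (auto simp: poly_0 [abs_def])
  moreover have "integral {-1..1} (poly (legendre_poly n * legendre_poly d)) = 0"
    using less d_def by (intro legendre_poly_orthogonal) simp
  moreover have "r = r' + smult c (legendre_poly d)" by (simp add: r'_def)
  ultimately show ?case by (simp add: distrib_left integral_poly_add integral_poly_smult)
qed

lemma legendre_poly_norm:
  "integral {-1..1} (poly (legendre_poly n * legendre_poly n)) = 2 / (2 * real n + 1)"
proof -
  define N where "N n = integral {-1..1} (poly (legendre_poly n * legendre_poly n))" for n
  define M where "M n = integral {-1..1} (poly ([:0, 1:] * legendre_poly n * legendre_poly (Suc n)))" for n
  have bonnet: "(real n + 2) * integral {-1..1} (poly (legendre_poly (Suc (Suc n)) * r))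
      = (2 * real n + 3) * integral {-1..1} (poly ([:0, 1:] * legendre_poly (Suc n) * r))
        - (real n + 1) * integral {-1..1} (poly (legendre_poly n * r))" for n r
    using arg_cong[OF legendre_poly_bonnet, of "\<lambda>p. integral {-1..1} (poly (p * r))"]
    by (simp only: left_diff_distrib mult_smult_left integral_poly_diff integral_poly_smult)
  have MN: "(2 * real n + 3) * M n = (real n + 1) * N n" for n
    using bonnet[of n "legendre_poly n"] legendre_poly_orthogonal[of "Suc (Suc n)" n]
    by (simp add: M_def N_def mult_ac)
  have NM: "(real n + 1) * N (Suc n) = (2 * real n + 1) * M n" for n
  proof (cases n)
    case 0 then show ?thesis by (simp add: M_def N_def)
  next
    case (Suc m)
    then show ?thesis
      using bonnet[of m "legendre_poly (Suc (Suc m))"] legendre_poly_orthogonal[of m "Suc (Suc m)"]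
      by (simp add: M_def N_def algebra_simps)
  qed
  have "(real n + 1) * ((2 * real n + 3) * N (Suc n) - (2 * real n + 1) * N n) = 0" for n
    using MN[of n] NM[of n] by algebra
  then have step: "(2 * real n + 3) * N (Suc n) = (2 * real n + 1) * N n" for n
    by (simp add: add_nonneg_eq_0_iff)
  have "(2 * real n + 1) * N n = 2"
  proof (induction n)
    case 0 then show ?case by (simp add: N_def poly_1 [abs_def])
  next
    case (Suc n) then show ?case using step[of n] by (simp add: algebra_simps)
  qed
  then show ?thesis unfolding N_def by (simp add: field_simps)
qed

definition cell_legendre :: "real \<Rightarrow> real \<Rightarrow> nat \<Rightarrow> real poly" where
  "cell_legendre a b n = legendre_poly n \<circ>\<^sub>p [:- (a + b) / (b - a), 2 / (b - a):]"

lemma poly_cell_legendre: "poly (cell_legendre a b n) t = shifted_legendre a b n t"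
  by (simp add: cell_legendre_def shifted_legendre_def poly_pcompose poly_legendre_poly
      add_divide_distrib diff_divide_distrib algebra_simps)

lemma degree_cell_legendre [simp]: "a < b \<Longrightarrow> degree (cell_legendre a b n) = n"
  by (simp add: cell_legendre_def degree_pcompose)

lemma coeff_cell_legendre_self:
  "a < b \<Longrightarrow> coeff (cell_legendre a b n) n = legendre_lead_coeff n * (2 / (b - a)) ^ n"
  using lead_coeff_comp[of "[:- (a + b) / (b - a), 2 / (b - a):]" "legendre_poly n"]
  by (simp add: cell_legendre_def degree_pcompose)

lemma cell_legendre_nonzero [simp]: "a < b \<Longrightarrow> cell_legendre a b n \<noteq> 0"
  using coeff_cell_legendre_self[of a b n] legendre_lead_coeff_pos[of n] by auto

lemma cell_legendre_orthogonal_lower: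
  assumes "a < b" "degree r < n"
  shows "integral {a..b} (poly (cell_legendre a b n * r)) = 0"
proof -
  define \<psi> where "\<psi> = [:(a + b) / 2, (b - a) / 2:]"
  define s where "s = [:- (a + b) / (b - a), 2 / (b - a):]"
  have "\<psi> \<circ>\<^sub>p s = [:0, 1:]"
    using assms(1) by (simp add: \<psi>_def s_def pcompose_pCons field_simps)
  then have "cell_legendre a b n * r = (legendre_poly n * (r \<circ>\<^sub>p \<psi>)) \<circ>\<^sub>p s"
    by (simp add: cell_legendre_def s_def pcompose_mult pcompose_assoc [symmetric])
  then have "integral {a..b} (poly (cell_legendre a b n * r))
      = (b - a) / 2 * integral {-1..1} (poly (legendre_poly n * (r \<circ>\<^sub>p \<psi>)))"
    unfolding s_def by (simp only: integral_poly_pcompose_affine[OF assms(1)])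
  moreover have "degree (r \<circ>\<^sub>p \<psi>) < n"
    using assms by (simp add: \<psi>_def degree_pcompose)
  ultimately show ?thesis by (simp add: legendre_poly_orthogonal_lower)
qed

lemma cell_legendre_norm:
  "a < b \<Longrightarrow> integral {a..b} (poly (cell_legendre a b n * cell_legendre a b n)) = (b - a) / (2 * real n + 1)"
  unfolding cell_legendre_def pcompose_mult [symmetric]
  by (simp only: integral_poly_pcompose_affine legendre_poly_norm) (simp add: field_simps)

lemma cell_legendre_lead_coeff_identity:
  assumes "a < b" "k \<ge> 1"
  shows "real k * (2 * real k + 1) * (coeff (cell_legendre a b k) k)\<^sup>2
       = (2 * real k - 1) * (real k + 1) * coeff (cell_legendre a b (Suc k)) (Suc k)
           * coeff (cell_legendre a b (k - 1)) (k - 1)"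
proof -
  define r where "r = 2 / (b - a)"
  have "Suc k + (k - 1) = k * 2" using assms(2) by simp
  then have "(r ^ k)\<^sup>2 = r ^ Suc k * r ^ (k - 1)"
    by (simp only: power_mult [symmetric] power_add [symmetric])
  then have "real k * (2 * real k + 1) * (legendre_lead_coeff k * r ^ k)\<^sup>2
      = (real k * (2 * real k + 1) * (legendre_lead_coeff k)\<^sup>2) * (r ^ Suc k * r ^ (k - 1))"
    by (simp only: power_mult_distrib mult_ac)
  also have "\<dots> = (2 * real k - 1) * (real k + 1) * (legendre_lead_coeff (Suc k) * r ^ Suc k)
      * (legendre_lead_coeff (k - 1) * r ^ (k - 1))"
    unfolding legendre_lead_coeff_identity[OF assms(2)] by (simp only: mult_ac)
  finally show ?thesis
    unfolding coeff_cell_legendre_self[OF assms(1)] r_def [symmetric] .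
qed

text \<open>\<open>\<parallel>\<alpha> L\<^sub>k\<parallel>\<^sup>2\<close> on \<open>[a, b]\<close>, where \<open>\<alpha>\<close> is the coefficient of \<open>L\<^sub>k\<close> in the Legendre expansion of \<open>p\<close>.\<close>

definition legendre_top_energy :: "real \<Rightarrow> real \<Rightarrow> nat \<Rightarrow> real poly \<Rightarrow> real" where
  "legendre_top_energy a b k p = (coeff p k / coeff (cell_legendre a b k) k)\<^sup>2 * ((b - a) / (2 * real k + 1))"

lemma legendre_top_energy_nonneg: "a < b \<Longrightarrow> legendre_top_energy a b k p \<ge> 0"
  by (simp add: legendre_top_energy_def)

lemma legendre_top_energy_le_integral:
  assumes "a < b" "degree p \<le> k"
  shows "legendre_top_energy a b k p \<le> integral {a..b} (poly (p * p))"
proof -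
  define L where "L = cell_legendre a b k"
  define \<alpha> where "\<alpha> = coeff p k / coeff L k"
  define r where "r = p - smult \<alpha> L"
  have "r = 0 \<or> degree r < k"
    using eliminate_lead_coeff[of p L] assms by (simp add: r_def \<alpha>_def L_def)
  then have orth: "integral {a..b} (poly (L * r)) = 0"
    using assms(1) by (auto simp: L_def cell_legendre_orthogonal_lower poly_0 [abs_def])
  have "p * p = smult (\<alpha>\<^sup>2) (L * L) + smult (2 * \<alpha>) (L * r) + r * r"
    by (intro poly_eq_poly_eq_iff [THEN iffD1] ext) (simp add: r_def algebra_simps power2_eq_square)
  then have "integral {a..b} (poly (p * p))
      = \<alpha>\<^sup>2 * integral {a..b} (poly (L * L)) + integral {a..b} (poly (r * r))"
    by (simp add: integral_poly_add integral_poly_smult orth)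
  moreover have "\<alpha>\<^sup>2 * integral {a..b} (poly (L * L)) = legendre_top_energy a b k p"
    unfolding L_def cell_legendre_norm[OF assms(1)] by (simp add: legendre_top_energy_def \<alpha>_def L_def)
  ultimately show ?thesis
    using integral_poly_square_nonneg[of a b r] by linarith
qed

section \<open>Quadrature error\<close>

definition quad_error :: "nat \<Rightarrow> (nat \<Rightarrow> real) \<Rightarrow> (nat \<Rightarrow> real) \<Rightarrow> (nat \<Rightarrow> real) \<Rightarrow> nat
    \<Rightarrow> real poly \<Rightarrow> real" where
  "quad_error k \<xi> w x i f = integral {x i..x (Suc i)} (poly f) - quad k \<xi> w x i (poly f)"

lemma quad_error_0 [simp]: "quad_error k \<xi> w x i 0 = 0"
  by (simp add: quad_error_def quad_def poly_0 [abs_def])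

lemma quad_error_diff:
  "quad_error k \<xi> w x i (f - g) = quad_error k \<xi> w x i f - quad_error k \<xi> w x i g"
  by (simp add: quad_error_def quad_def integral_poly_diff sum_subtractf algebra_simps)

lemma quad_error_smult: "quad_error k \<xi> w x i (smult c f) = c * quad_error k \<xi> w x i f"
  by (simp add: quad_error_def quad_def integral_poly_smult sum_distrib_left algebra_simps)

lemma quad_error_eq_lead_coeff_ratio:
  assumes exact: "\<And>g. degree g < degree m \<Longrightarrow> quad_error k \<xi> w x i g = 0"
    and "degree f \<le> degree m" "m \<noteq> 0"
  shows "quad_error k \<xi> w x i f = coeff f (degree m) / lead_coeff m * quad_error k \<xi> w x i m"
proof -
  define r where "r = f - smult (coeff f (degree m) / lead_coeff m) m"
  have "r = 0 \<or> degree r < degree m"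
    using eliminate_lead_coeff[of f m] assms(2,3) by (simp add: r_def)
  then have "quad_error k \<xi> w x i r = 0" using exact by auto
  then show ?thesis by (simp add: r_def quad_error_diff quad_error_smult)
qed

text \<open>\<open>Q\<^sub>i(L\<^sub>i\<^sub>,\<^sub>k\<^sub>+\<^sub>1 L\<^sub>i\<^sub>,\<^sub>k\<^sub>-\<^sub>1) / h\<^sub>i\<close>, which does not depend on the cell.\<close>

definition ref_quad_legendre_product :: "nat \<Rightarrow> (nat \<Rightarrow> real) \<Rightarrow> (nat \<Rightarrow> real) \<Rightarrow> real" where
  "ref_quad_legendre_product k \<xi> w = (\<Sum>j\<le>Suc k. w j * (legP (Suc k) (2 * \<xi> j - 1) * legP (k - 1) (2 * \<xi> j - 1)))"

lemma quad_shifted_legendre_product: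
  assumes "x i < x (Suc i)"
  shows "quad k \<xi> w x i (\<lambda>t. shifted_legendre (x i) (x (Suc i)) (Suc k) t * shifted_legendre (x i) (x (Suc i)) (k - 1) t)
       = cell_size x i * ref_quad_legendre_product k \<xi> w"
proof -
  have "(2 * (x i + (x (Suc i) - x i) * z) - x i - x (Suc i)) / (x (Suc i) - x i) = 2 * z - 1" for z
    using assms by (simp add: field_simps)
  then show ?thesis
    by (simp add: quad_def ref_quad_legendre_product_def weight_def node_def shifted_legendre_def cell_size_def
        sum_distrib_left mult_ac del: sum.atMost_Suc)
qed

lemma quad_error_cell_legendre_product:
  assumes "x i < x (Suc i)"
  shows "quad_error k \<xi> w x i (cell_legendre (x i) (x (Suc i)) (Suc k) * cell_legendre (x i) (x (Suc i)) (k - 1))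
       = - cell_size x i * ref_quad_legendre_product k \<xi> w"
  using assms cell_legendre_orthogonal_lower[OF assms, of "cell_legendre (x i) (x (Suc i)) (k - 1)" "Suc k"]
    quad_shifted_legendre_product[OF assms, of k \<xi> w]
  by (simp add: quad_error_def poly_cell_legendre poly_mult [abs_def])

section \<open>The operator \<open>M\<^sup>*\<close> on a cell\<close>

lemma sum_prefix_sums_mult_diff:
  fixes V d :: "nat \<Rightarrow> real"
  shows "(\<Sum>j\<le>m. (c + (\<Sum>l\<le>j. d l)) * (V (Suc j) - V j))
     = c * (V (Suc m) - V 0) + (\<Sum>l\<le>m. d l * (V (Suc m) - V l))"
proof (induction m)
  case (Suc m)
  have "(\<Sum>l\<le>m. d l * (V (Suc (Suc m)) - V l))
      = (\<Sum>l\<le>m. d l * (V (Suc m) - V l) + d l * (V (Suc (Suc m)) - V (Suc m)))"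
    by (rule sum.cong) (simp_all add: algebra_simps)
  then have "(\<Sum>l\<le>m. d l * (V (Suc (Suc m)) - V l))
      = (\<Sum>l\<le>m. d l * (V (Suc m) - V l)) + (\<Sum>l\<le>m. d l) * (V (Suc (Suc m)) - V (Suc m))"
    by (simp add: sum.distrib sum_distrib_right)
  then show ?case using Suc.IH by (simp add: algebra_simps)
qed (simp add: distrib_right)

definition cell_ip_star :: "nat \<Rightarrow> (nat \<Rightarrow> real) \<Rightarrow> (nat \<Rightarrow> real) \<Rightarrow> (nat \<Rightarrow> real)
    \<Rightarrow> (nat \<Rightarrow> real poly) \<Rightarrow> (nat \<Rightarrow> real poly) \<Rightarrow> nat \<Rightarrow> real" where
  "cell_ip_star k \<xi> w x p q i
     = (\<Sum>j\<le>k. Mstar_val x \<xi> w q i j * integral {node x \<xi> i j..node x \<xi> i (Suc j)} (poly (p i)))"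

lemma cell_ip_star_summation_by_parts:
  assumes \<xi>: "\<xi> 0 = 0" "\<xi> (Suc k) = 1" "\<forall>j\<le>k. \<xi> j < \<xi> (Suc j)" and "x i < x (Suc i)"
    and exact: "quad_error k \<xi> w x i (pderiv (q i)) = 0"
    and V: "pderiv V = p i" "poly V (x i) = 0"
  shows "cell_ip_star k \<xi> w x p q i
       = poly (q i) (x (Suc i)) * poly V (x (Suc i)) - quad k \<xi> w x i (poly (pderiv (q i) * V))"
proof -
  define t where "t = node x \<xi> i"
  define d where "d l = weight x w i l * poly (pderiv (q i)) (t l)" for l
  define Vt where "Vt l = poly V (t l)" for l
  have t_ends: "t 0 = x i" "t (Suc k) = x (Suc i)"
    using \<xi> by (simp_all add: t_def node_def cell_size_def)
  have "t j \<le> t (Suc j)" if "j \<le> k" for j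
  proof -
    have "\<xi> j \<le> \<xi> (Suc j)" using \<xi>(3) that by fastforce
    then show ?thesis using \<open>x i < x (Suc i)\<close> by (simp add: t_def node_def cell_size_def mult_left_mono)
  qed
  then have "integral {t j..t (Suc j)} (poly (p i)) = Vt (Suc j) - Vt j" if "j \<le> k" for j
    using that integral_poly_pderiv[of "t j" "t (Suc j)" V] by (simp add: Vt_def V(1))
  then have "cell_ip_star k \<xi> w x p q i = (\<Sum>j\<le>k. (poly (q i) (t 0) + (\<Sum>l\<le>j. d l)) * (Vt (Suc j) - Vt j))"
    by (simp add: cell_ip_star_def Mstar_val_def d_def t_def)
  also have "\<dots> = poly (q i) (t 0) * (Vt (Suc k) - Vt 0) + (\<Sum>l\<le>k. d l * (Vt (Suc k) - Vt l))"
    by (rule sum_prefix_sums_mult_diff)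
  also have "\<dots> = poly (q i) (x i) * Vt (Suc k) + Vt (Suc k) * (\<Sum>l\<le>k. d l) - (\<Sum>l\<le>k. d l * Vt l)"
    using V(2) t_ends by (simp add: Vt_def algebra_simps sum_subtractf sum_distrib_right)
  also have "(\<Sum>l\<le>k. d l) = poly (q i) (x (Suc i)) - poly (q i) (x i) - d (Suc k)"
  proof -
    have "(\<Sum>l\<le>Suc k. d l) = quad k \<xi> w x i (poly (pderiv (q i)))"
      by (simp add: quad_def d_def t_def del: sum.atMost_Suc)
    also have "\<dots> = poly (q i) (x (Suc i)) - poly (q i) (x i)"
      using exact \<open>x i < x (Suc i)\<close> by (simp add: quad_error_def integral_poly_pderiv)
    finally show ?thesis by simp
  qed
  also have "(\<Sum>l\<le>k. d l * Vt l) = quad k \<xi> w x i (poly (pderiv (q i) * V)) - d (Suc k) * Vt (Suc k)"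
    by (simp add: quad_def d_def Vt_def t_def mult_ac)
  finally show ?thesis using t_ends by (simp add: Vt_def algebra_simps)
qed

lemma cell_ip_star_eq:
  assumes "\<xi> 0 = 0" "\<xi> (Suc k) = 1" "\<forall>j\<le>k. \<xi> j < \<xi> (Suc j)" "x i < x (Suc i)"
    and "quad_error k \<xi> w x i (pderiv (q i)) = 0"
    and "pderiv V = p i" "poly V (x i) = 0"
  shows "cell_ip_star k \<xi> w x p q i
       = integral {x i..x (Suc i)} (poly (p i * q i)) + quad_error k \<xi> w x i (pderiv (q i) * V)"
  using cell_ip_star_summation_by_parts[of \<xi> k x i w q V p] integral_poly_by_parts[of "x i" "x (Suc i)" V "p i" "q i"] assms
  by (simp add: quad_error_def)

lemma cell_ip_star_consistent:
  assumes "\<xi> 0 = 0" "\<xi> (Suc k) = 1" "\<forall>j\<le>k. \<xi> j < \<xi> (Suc j)" "x i < x (Suc i)"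
    and exact: "\<forall>g. degree g \<le> 2 * k - 1 \<longrightarrow> quad_error k \<xi> w x i g = 0"
    and "degree (p i) \<le> k" "degree (q i) \<le> k - 1"
  shows "cell_ip_star k \<xi> w x p q i = integral {x i..x (Suc i)} (poly (p i * q i))"
proof -
  obtain V where V: "pderiv V = p i" "poly V (x i) = 0" "degree V \<le> degree (p i) + 1"
    using poly_antiderivative_vanishing_at by blast
  have "degree (pderiv (q i)) \<le> 2 * k - 1"
    using assms(7) by (simp add: degree_pderiv)
  moreover have "degree (pderiv (q i) * V) \<le> 2 * k - 1"
  proof (cases "pderiv (q i) = 0")
    case False
    then have "degree (pderiv (q i)) + 1 \<le> k - 1"
      using assms(7) degree_pderiv[of "q i"] pderiv_eq_0_iff[of "q i"] by linarith
    then show ?thesis using degree_mult_le[of "pderiv (q i)" V] V(3) assms(6) by linarith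
  qed simp
  ultimately show ?thesis
    using cell_ip_star_eq[of \<xi> k x i w q V p] assms V exact by simp
qed

lemma cell_ip_star_self:
  assumes "\<xi> 0 = 0" "\<xi> (Suc k) = 1" "\<forall>j\<le>k. \<xi> j < \<xi> (Suc j)" "x i < x (Suc i)" "k \<ge> 1"
    and exact: "\<forall>g. degree g \<le> 2 * k - 1 \<longrightarrow> quad_error k \<xi> w x i g = 0"
    and "degree (p i) \<le> k"
  shows "cell_ip_star k \<xi> w x p p i = integral {x i..x (Suc i)} (poly (p i * p i))
           - (2 * real k - 1) * ref_quad_legendre_product k \<xi> w * legendre_top_energy (x i) (x (Suc i)) k (p i)"
proof -
  define a b where "a = x i" and "b = x (Suc i)"
  define lc where "lc n = coeff (cell_legendre a b n) n" for n
  define m where "m = cell_legendre a b (Suc k) * cell_legendre a b (k - 1)"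
  define S where "S = ref_quad_legendre_product k \<xi> w"
  obtain V where V: "pderiv V = p i" "poly V a = 0" "degree V \<le> degree (p i) + 1"
    using poly_antiderivative_vanishing_at a_def by metis
  have ab: "a < b" using assms(4) by (simp add: a_def b_def)
  have deg_m: "degree m = 2 * k" and "m \<noteq> 0"
    using ab assms(5) by (simp_all add: m_def degree_mult_eq)
  have lead_m: "lead_coeff m = lc (Suc k) * lc (k - 1)"
    using ab by (simp only: m_def lc_def lead_coeff_mult degree_cell_legendre)
  have error_m: "quad_error k \<xi> w x i m = - (b - a) * S"
    using quad_error_cell_legendre_product[OF assms(4)] by (simp add: m_def S_def a_def b_def cell_size_def)
  have "quad_error k \<xi> w x i (pderiv (p i) * V)
      = coeff (pderiv (p i) * V) (degree m) / lead_coeff m * quad_error k \<xi> w x i m"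
  proof (rule quad_error_eq_lead_coeff_ratio)
    have "degree (pderiv (p i)) \<le> k - 1" using assms(7) by (simp add: degree_pderiv)
    then show "degree (pderiv (p i) * V) \<le> degree m"
      using degree_mult_le[of "pderiv (p i)" V] V(3) assms(5,7) deg_m by linarith
  qed (use exact deg_m \<open>m \<noteq> 0\<close> in auto)
  also have "\<dots> = real k / (real k + 1) * (coeff (p i) k)\<^sup>2 / (lc (Suc k) * lc (k - 1)) * (- (b - a) * S)"
    unfolding lead_m error_m unfolding deg_m coeff_pderiv_mult_antiderivative[OF V(1) assms(7,5)] ..
  also have "\<dots> = - (2 * real k - 1) * S * legendre_top_energy a b k (p i)"
  proof -
    have "lc n \<noteq> 0" for n
      using ab legendre_lead_coeff_pos[of n] by (simp add: lc_def coeff_cell_legendre_self)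
    then have "lc k \<noteq> 0" "lc (Suc k) * lc (k - 1) \<noteq> 0" by simp_all
    moreover have "real k + 1 \<noteq> 0" "2 * real k + 1 \<noteq> 0" by linarith+
    ultimately show ?thesis
      using cell_legendre_lead_coeff_identity[OF ab assms(5), folded lc_def]
      by (simp add: legendre_top_energy_def lc_def [symmetric] divide_simps) algebra
  qed
  finally show ?thesis
    using cell_ip_star_eq[of \<xi> k x i w p V p] assms V exact by (simp add: a_def b_def S_def degree_pderiv algebra_simps)
qed

section \<open>Norm equivalence\<close>

lemma assumption_S_exact:
  "assumption_S k \<xi> w x n \<Longrightarrow> i < n \<Longrightarrow> \<forall>g. degree g \<le> 2 * k - 1 \<longrightarrow> quad_error k \<xi> w x i g = 0"
  by (simp add: assumption_S_def quad_error_def)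

lemma ref_quad_legendre_product_less:
  assumes "assumption_S k \<xi> w x n" "i < n" "x i < x (Suc i)"
  shows "(2 * real k - 1) * ref_quad_legendre_product k \<xi> w < 1"
proof -
  have k: "k \<ge> 1" and "cell_size x i / real (2 * k - 1) - cell_size x i * ref_quad_legendre_product k \<xi> w > 0"
    using assms quad_shifted_legendre_product[OF assms(3)] by (auto simp: assumption_S_def)
  moreover have "real (2 * k - 1) = 2 * real k - 1" using k by (simp add: of_nat_diff)
  moreover have "2 * real k - 1 > 0" using k by simp
  ultimately have "cell_size x i * ((2 * real k - 1) * ref_quad_legendre_product k \<xi> w) < cell_size x i * 1"
    by (simp add: field_simps)
  moreover have "cell_size x i > 0" using assms(3) by (simp add: cell_size_def)
  ultimately show ?thesis by (simp only: mult_less_cancel_left_pos)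
qed

lemma ip_star_eq_sum_cell_ip_star: "ip_star k \<xi> w x n p q = (\<Sum>i<n. cell_ip_star k \<xi> w x p q i)"
  by (simp add: ip_star_def cell_ip_star_def)

lemma pw_ip_eq_sum: "pw_ip x n p q = (\<Sum>i<n. integral {x i..x (Suc i)} (poly (p i * q i)))"
  by (simp add: pw_ip_def poly_mult [abs_def])

lemma ip_star_consistent:
  assumes "\<xi> 0 = 0" "\<xi> (Suc k) = 1" "\<forall>j\<le>k. \<xi> j < \<xi> (Suc j)"
    and "\<forall>i<n. x i < x (Suc i)" "assumption_S k \<xi> w x n"
    and "pw_space n k p" "pw_space n (k - 1) q"
  shows "ip_star k \<xi> w x n p q = pw_ip x n p q"
  unfolding ip_star_eq_sum_cell_ip_star pw_ip_eq_sum
proof (rule sum.cong [OF refl])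
  fix i assume "i \<in> {..<n}"
  then show "cell_ip_star k \<xi> w x p q i = integral {x i..x (Suc i)} (poly (p i * q i))"
    using cell_ip_star_consistent[OF assms(1-3), of x i w p q] assumption_S_exact[OF assms(5)] assms(4,6,7)
    by (simp add: pw_space_def)
qed

lemma ip_star_self:
  assumes "\<xi> 0 = 0" "\<xi> (Suc k) = 1" "\<forall>j\<le>k. \<xi> j < \<xi> (Suc j)"
    and "\<forall>i<n. x i < x (Suc i)" "assumption_S k \<xi> w x n" "pw_space n k p"
  shows "ip_star k \<xi> w x n p p = pw_ip x n p p
           - (2 * real k - 1) * ref_quad_legendre_product k \<xi> w * (\<Sum>i<n. legendre_top_energy (x i) (x (Suc i)) k (p i))"
  unfolding ip_star_eq_sum_cell_ip_star pw_ip_eq_sum sum_distrib_left sum_subtractf [symmetric]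
proof (rule sum.cong [OF refl])
  fix i assume "i \<in> {..<n}"
  moreover have "k \<ge> 1" using assms(5) by (simp add: assumption_S_def)
  ultimately show "cell_ip_star k \<xi> w x p p i = integral {x i..x (Suc i)} (poly (p i * p i))
      - (2 * real k - 1) * ref_quad_legendre_product k \<xi> w * legendre_top_energy (x i) (x (Suc i)) k (p i)"
    using cell_ip_star_self[OF assms(1-3), of x i w p] assumption_S_exact[OF assms(5)] assms(4,6)
    by (simp add: pw_space_def)
qed

lemma sum_legendre_top_energy_bounds:
  assumes "\<forall>i<n. x i < x (Suc i)" "pw_space n k p"
  shows "0 \<le> (\<Sum>i<n. legendre_top_energy (x i) (x (Suc i)) k (p i))"
    and "(\<Sum>i<n. legendre_top_energy (x i) (x (Suc i)) k (p i)) \<le> pw_ip x n p p"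
  using assms legendre_top_energy_nonneg legendre_top_energy_le_integral
  by (auto simp: pw_ip_eq_sum pw_space_def intro!: sum_nonneg sum_mono)

lemma sqrt_bounds_of_perturbation:
  fixes N B \<sigma> :: real
  assumes "0 \<le> B" "B \<le> N"
  shows "sqrt (min 1 (1 - \<sigma>)) * sqrt N \<le> sqrt (N - \<sigma> * B)"
    and "sqrt (N - \<sigma> * B) \<le> sqrt (max 1 (1 - \<sigma>)) * sqrt N"
proof -
  have "min 1 (1 - \<sigma>) * N \<le> N - \<sigma> * B" "N - \<sigma> * B \<le> max 1 (1 - \<sigma>) * N"
    using assms mult_left_mono[OF assms(2), of \<sigma>] mult_left_mono_neg[OF assms(2), of \<sigma>]
      mult_left_mono[OF assms(1), of \<sigma>] mult_left_mono_neg[OF assms(1), of \<sigma>]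
    by (auto simp: min_def max_def algebra_simps)
  then show "sqrt (min 1 (1 - \<sigma>)) * sqrt N \<le> sqrt (N - \<sigma> * B)"
    and "sqrt (N - \<sigma> * B) \<le> sqrt (max 1 (1 - \<sigma>)) * sqrt N"
    by (simp_all flip: real_sqrt_mult)
qed

lemma ip_star_norm_equivalence:
  assumes "\<xi> 0 = 0" "\<xi> (Suc k) = 1" "\<forall>j\<le>k. \<xi> j < \<xi> (Suc j)"
    and "\<forall>i<n. x i < x (Suc i)" "assumption_S k \<xi> w x n" "pw_space n k p"
  defines "\<sigma> \<equiv> (2 * real k - 1) * ref_quad_legendre_product k \<xi> w"
  shows "sqrt (min 1 (1 - \<sigma>)) * sqrt (pw_ip x n p p) \<le> sqrt (ip_star k \<xi> w x n p p)"
    and "sqrt (ip_star k \<xi> w x n p p) \<le> sqrt (max 1 (1 - \<sigma>)) * sqrt (pw_ip x n p p)"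
  using sqrt_bounds_of_perturbation[OF sum_legendre_top_energy_bounds[OF assms(4,6)], of \<sigma>]
  unfolding ip_star_self[OF assms(1-6)] \<sigma>_def by (simp_all only: mult.assoc)

theorem proposition3p10:
  fixes k :: nat and \<xi> w :: "nat \<Rightarrow> real" and Cq :: real
  assumes "\<xi> 0 = 0" and "\<xi> (Suc k) = 1" and "\<forall>j\<le>k. \<xi> j < \<xi> (Suc j)"
  shows "\<exists>c>0. \<exists>C>0. \<forall>(x::nat \<Rightarrow> real) n.
     (n \<ge> 1 \<and> (\<forall>i<n. x i < x (Suc i)) \<and> quasi_uniform Cq x n \<and> assumption_S k \<xi> w x n) \<longrightarrow>
     ((\<forall>p q. pw_space n k p \<and> pw_space n (k - 1) q \<longrightarrow> ip_star k \<xi> w x n p q = pw_ip x n p q)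
      \<and> (\<forall>p. pw_space n k p \<longrightarrow>
            c * sqrt (pw_ip x n p p) \<le> sqrt (ip_star k \<xi> w x n p p)
          \<and> sqrt (ip_star k \<xi> w x n p p) \<le> C * sqrt (pw_ip x n p p)))"
proof -
  define \<sigma> where "\<sigma> = (2 * real k - 1) * ref_quad_legendre_product k \<xi> w"
  \<comment> \<open>If \<open>\<sigma> \<ge> 1\<close>, no mesh satisfies (S) and any \<open>c\<close> will do.\<close>
  define c where "c = (if \<sigma> < 1 then sqrt (min 1 (1 - \<sigma>)) else 1)"
  define C where "C = sqrt (max 1 (1 - \<sigma>))"
  have "c > 0" "C > 0" by (simp_all add: c_def C_def)
  moreover have "(\<forall>p q. pw_space n k p \<and> pw_space n (k - 1) q \<longrightarrow> ip_star k \<xi> w x n p q = pw_ip x n p q)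
      \<and> (\<forall>p. pw_space n k p \<longrightarrow>
            c * sqrt (pw_ip x n p p) \<le> sqrt (ip_star k \<xi> w x n p p)
          \<and> sqrt (ip_star k \<xi> w x n p p) \<le> C * sqrt (pw_ip x n p p))"
    if "n \<ge> 1" "\<forall>i<n. x i < x (Suc i)" "assumption_S k \<xi> w x n" for x n
  proof -
    have "\<sigma> < 1" using ref_quad_legendre_product_less[of k \<xi> w x n 0] that by (simp add: \<sigma>_def)
    then show ?thesis
      using ip_star_consistent[OF assms that(2,3)] ip_star_norm_equivalence[OF assms that(2,3)]
      by (simp add: c_def C_def \<sigma>_def)
  qed
  ultimately show ?thesis by blast
qed

end
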